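(* Let $\Omega$ be a finite set, $(H_i\mid i\in\Omega)$ finite abelian groups with $|H_i|=|H_l|\geqslant 3$ for all $i,l\in\Omega$, $\mathbf{H}=\prod_{i\in\Omega}H_i$, and $\mathbf{P}=(\Omega,\preccurlyeq_{\mathbf{P}})$ a poset. Let $\Lambda$ be the dual partition of $\mathcal{Q}(\mathbf{H},\mathbf{P})$. Then $\Lambda$ is finer than $\mathcal{Q}(\hat{\mathbf{H}},\overline{\mathbf{P}})$, i.e., every block of $\Lambda$ is contained in some block of $\mathcal{Q}(\hat{\mathbf{H}},\overline{\mathbf{P}})$.
   Context: $\hat{\mathbf{H}}$ is the character group of $\mathbf{H}$, identified with $\prod_{i}\hat{H_i}$ via $\alpha(\beta)=\prod_i\alpha_{(i)}(\beta_{(i)})$. For a codeword $\beta$ (in $\mathbf{H}$ or $\hat{\mathbf{H}}$), $\mathrm{supp}(\beta)$ is the set of coordinates $i$ where $\beta_{(i)}$ is not the identity. For $B\subseteq\Omega$, $\langle B\rangle_{\mathbf{P}}=\{a:\exists b\in B, a\preccurlyeq_{\mathbf{P}}b\}$, and $\mathrm{wt}_{\mathbf{P}}(\beta)=|\langle\mathrm{supp}(\beta)\rangle_{\mathbf{P}}|$. $\mathcal{Q}(\mathbf{H},\mathbf{P})$ is the partition of $\mathbf{H}$ into classes of equal $\mathbf{P}$-weight; $\mathcal{Q}(\hat{\mathbf{H}},\overline{\mathbf{P}})$ is the partition of $\hat{\mathbf{H}}$ into classes of equal $\overline{\mathbf{P}}$-weight, where $\overline{\mathbf{P}}$ is the dual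 poset ($u\preccurlyeq_{\overline{\mathbf{P}}}v\iff v\preccurlyeq_{\mathbf{P}}u$). The dual partition of a partition $\Gamma$ of $\mathbf{H}$ is the partition of $\hat{\mathbf{H}}$ in which $\chi,\psi$ lie in the same block iff $\sum_{b\in B}\chi(b)=\sum_{b\in B}\psi(b)$ for every block $B\in\Gamma$. *)

theory Defs
  imports "HOL-Algebra.Algebra" "HOL-Library.FuncSet" Complex_Main
begin

definition is_char :: "('a, 'b) monoid_scheme \<Rightarrow> ('a \<Rightarrow> complex) \<Rightarrow> bool" where
  "is_char G \<chi> \<longleftrightarrow> \<chi> \<in> carrier G \<rightarrow>\<^sub>E UNIV
     \<and> (\<forall>x\<in>carrier G. \<forall>y\<in>carrier G. \<chi> (x \<otimes>\<^bsub>G\<^esub> y) = \<chi> x * \<chi> y)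
     \<and> (\<forall>x\<in>carrier G. cmod (\<chi> x) = 1)"

definition trivial_char :: "('a, 'b) monoid_scheme \<Rightarrow> ('a \<Rightarrow> complex)" where
  "trivial_char G = (\<lambda>x\<in>carrier G. 1)"

definition prod_carrier :: "'i set \<Rightarrow> ('i \<Rightarrow> ('a, 'b) monoid_scheme) \<Rightarrow> ('i \<Rightarrow> 'a) set" where
  "prod_carrier \<Omega> H = (\<Pi>\<^sub>E i\<in>\<Omega>. carrier (H i))"

text \<open>The character group \<open>hat H\<close>, identified with \<open>\<Prod> \<hat>H_i\<close>.\<close>
definition char_prod :: "'i set \<Rightarrow> ('i \<Rightarrow> ('a, 'b) monoid_scheme) \<Rightarrow> ('i \<Rightarrow> 'a \<Rightarrow> complex) set" where
  "char_prod \<Omega> H = (\<Pi>\<^sub>E i\<in>\<Omega>. {\<chi>. is_char (H i) \<chi>})"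

definition char_eval :: "'i set \<Rightarrow> ('i \<Rightarrow> 'a \<Rightarrow> complex) \<Rightarrow> ('i \<Rightarrow> 'a) \<Rightarrow> complex" where
  "char_eval \<Omega> \<alpha> \<beta> = (\<Prod>i\<in>\<Omega>. \<alpha> i (\<beta> i))"

definition supp_H :: "'i set \<Rightarrow> ('i \<Rightarrow> ('a, 'b) monoid_scheme) \<Rightarrow> ('i \<Rightarrow> 'a) \<Rightarrow> 'i set" where
  "supp_H \<Omega> H \<beta> = {i\<in>\<Omega>. \<beta> i \<noteq> \<one>\<^bsub>H i\<^esub>}"

definition supp_Hhat :: "'i set \<Rightarrow> ('i \<Rightarrow> ('a, 'b) monoid_scheme) \<Rightarrow> ('i \<Rightarrow> 'a \<Rightarrow> complex) \<Rightarrow> 'i set" where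
  "supp_Hhat \<Omega> H \<alpha> = {i\<in>\<Omega>. \<alpha> i \<noteq> trivial_char (H i)}"

definition poset_on :: "'i set \<Rightarrow> ('i \<Rightarrow> 'i \<Rightarrow> bool) \<Rightarrow> bool" where
  "poset_on \<Omega> ple \<longleftrightarrow> (\<forall>a\<in>\<Omega>. ple a a)
     \<and> (\<forall>a\<in>\<Omega>. \<forall>b\<in>\<Omega>. ple a b \<and> ple b a \<longrightarrow> a = b)
     \<and> (\<forall>a\<in>\<Omega>. \<forall>b\<in>\<Omega>. \<forall>c\<in>\<Omega>. ple a b \<and> ple b c \<longrightarrow> ple a c)"

definition dual_order_rel :: "('i \<Rightarrow> 'i \<Rightarrow> bool) \<Rightarrow> ('i \<Rightarrow> 'i \<Rightarrow> bool)" where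
  "dual_order_rel ple = (\<lambda>u v. ple v u)"

definition ideal_gen :: "'i set \<Rightarrow> ('i \<Rightarrow> 'i \<Rightarrow> bool) \<Rightarrow> 'i set \<Rightarrow> 'i set" where
  "ideal_gen \<Omega> ple B = {a\<in>\<Omega>. \<exists>b\<in>B. ple a b}"

definition wt_H :: "'i set \<Rightarrow> ('i \<Rightarrow> ('a, 'b) monoid_scheme) \<Rightarrow> ('i \<Rightarrow> 'i \<Rightarrow> bool) \<Rightarrow> ('i \<Rightarrow> 'a) \<Rightarrow> nat" where
  "wt_H \<Omega> H ple \<beta> = card (ideal_gen \<Omega> ple (supp_H \<Omega> H \<beta>))"

definition wt_Hhat :: "'i set \<Rightarrow> ('i \<Rightarrow> ('a, 'b) monoid_scheme) \<Rightarrow> ('i \<Rightarrow> 'i \<Rightarrow> bool) \<Rightarrow> ('i \<Rightarrow> 'a \<Rightarrow> complex) \<Rightarrow> nat" where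
  "wt_Hhat \<Omega> H ple \<alpha> = card (ideal_gen \<Omega> ple (supp_Hhat \<Omega> H \<alpha>))"

definition level_partition :: "'x set \<Rightarrow> ('x \<Rightarrow> nat) \<Rightarrow> 'x set set" where
  "level_partition S f = (\<lambda>n. {s\<in>S. f s = n}) ` (f ` S)"

definition dual_partition :: "'i set \<Rightarrow> ('i \<Rightarrow> ('a, 'b) monoid_scheme) \<Rightarrow> ('i \<Rightarrow> 'a) set set \<Rightarrow> ('i \<Rightarrow> 'a \<Rightarrow> complex) set set" where
  "dual_partition \<Omega> H Gamma =
     (\<lambda>\<chi>. {\<psi>\<in>char_prod \<Omega> H. \<forall>B\<in>Gamma. (\<Sum>b\<in>B. char_eval \<Omega> \<chi> b) = (\<Sum>b\<in>B. char_eval \<Omega> \<psi> b)})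
       ` char_prod \<Omega> H"

definition finer :: "'x set set \<Rightarrow> 'x set set \<Rightarrow> bool" where
  "finer \<Lambda> Q \<longleftrightarrow> (\<forall>A\<in>\<Lambda>. \<exists>B\<in>Q. A \<subseteq> B)"

end

theory Submission
  imports Defs
begin

(* Fix a character \<chi> with support J and group the codewords by the ideal I they generate.
  The sum of \<chi> over the codewords generating I factorises over the coordinates: a maximal
  element of I contributes q - 1 or -1, a non-maximal element of I contributes q or 0,
  according as \<chi> is trivial there or not, and every other coordinate contributes 1.
  Hence this fibre sum vanishes unless I lies in the ideal I0 of those elements that have
  no element of J strictly below them. So |I0| is the largest weight with a nonzero level
  sum, and that level sum has absolute value q^c (q - 1)^a with c + a = |I0 - J|, which is
  |\<Omega>| minus the dual weight of \<chi>. For q \<ge> 3 the numbers q and q - 1 are coprime and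
  both exceed 1, so the level sums determine c and a, hence the dual weight. *)

lemma is_char_one:
  fixes G (structure)
  assumes "group G" and "is_char G \<chi>"
  shows "\<chi> \<one>\<^bsub>G\<^esub> = 1"
proof -
  interpret group G by fact
  have "\<chi> \<one> = \<chi> \<one> * \<chi> \<one>" and "\<chi> \<one> \<noteq> 0"
    using assms(2) unfolding is_char_def by (metis one_closed l_one, force)
  then show ?thesis by simp
qed

lemma sum_is_char:
  fixes G (structure)
  assumes "group G" and "is_char G \<chi>"
  shows "(\<Sum>h\<in>carrier G. \<chi> h) = (if \<chi> = trivial_char G then of_nat (card (carrier G)) else 0)"
proof (cases "\<chi> = trivial_char G")
  case True
  then show ?thesis by (simp add: trivial_char_def)
next
  case False
  interpret group G by fact
  have "\<chi> \<in> extensional (carrier G)"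
    using assms(2) unfolding is_char_def PiE_def by auto
  with False obtain g where g: "g \<in> carrier G" "\<chi> g \<noteq> 1"
    unfolding trivial_char_def by (metis restrict_ext extensional_restrict)
  have "(\<Sum>h\<in>carrier G. \<chi> h) = (\<Sum>h\<in>carrier G. \<chi> (g \<otimes> h))"
    by (rule sum.reindex_bij_witness[where j="\<lambda>h. inv g \<otimes> h" and i="\<lambda>h. g \<otimes> h"])
       (use g in \<open>auto simp: m_assoc[symmetric]\<close>)
  also have "\<dots> = \<chi> g * (\<Sum>h\<in>carrier G. \<chi> h)"
    using assms(2) g unfolding is_char_def by (simp add: sum_distrib_left)
  finally have "(1 - \<chi> g) * (\<Sum>h\<in>carrier G. \<chi> h) = 0"
    by (simp add: algebra_simps)
  with g False show ?thesis by simp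
qed

definition maximals :: "('i \<Rightarrow> 'i \<Rightarrow> bool) \<Rightarrow> 'i set \<Rightarrow> 'i set" where
  "maximals ple I = {x\<in>I. \<forall>y\<in>I. ple x y \<longrightarrow> y = x}"

definition down_closed :: "'i set \<Rightarrow> ('i \<Rightarrow> 'i \<Rightarrow> bool) \<Rightarrow> 'i set \<Rightarrow> bool" where
  "down_closed \<Omega> ple I \<longleftrightarrow> I \<subseteq> \<Omega> \<and> (\<forall>x\<in>I. \<forall>y\<in>\<Omega>. ple y x \<longrightarrow> y \<in> I)"

definition clear_below :: "'i set \<Rightarrow> ('i \<Rightarrow> 'i \<Rightarrow> bool) \<Rightarrow> 'i set \<Rightarrow> 'i set" where
  "clear_below \<Omega> ple J = {x\<in>\<Omega>. \<forall>y\<in>J. ple y x \<longrightarrow> y = x}"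

lemma poset_on_refl: "poset_on \<Omega> ple \<Longrightarrow> a \<in> \<Omega> \<Longrightarrow> ple a a"
  unfolding poset_on_def by blast

lemma poset_on_antisym:
  "poset_on \<Omega> ple \<Longrightarrow> a \<in> \<Omega> \<Longrightarrow> b \<in> \<Omega> \<Longrightarrow> ple a b \<Longrightarrow> ple b a \<Longrightarrow> a = b"
  unfolding poset_on_def by blast

lemma poset_on_trans:
  "poset_on \<Omega> ple \<Longrightarrow> a \<in> \<Omega> \<Longrightarrow> b \<in> \<Omega> \<Longrightarrow> c \<in> \<Omega> \<Longrightarrow> ple a b \<Longrightarrow> ple b c \<Longrightarrow> ple a c"
  unfolding poset_on_def by blast

lemma ex_maximals_above:
  assumes "poset_on \<Omega> ple" and "finite I" and "I \<subseteq> \<Omega>" and "x \<in> I"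
  shows "\<exists>y\<in>maximals ple I. ple x y"
proof -
  define below where "below z = card {w\<in>I. ple w z}" for z
  have "\<exists>y. (y \<in> I \<and> ple x y) \<and> (\<forall>z. z \<in> I \<and> ple x z \<longrightarrow> below z \<le> below y)"
  proof (rule ex_has_greatest_nat[where b = "Suc (card I)"])
    show "x \<in> I \<and> ple x x"
      using assms(1,3,4) poset_on_refl by (metis subsetD)
    show "\<forall>z. z \<in> I \<and> ple x z \<longrightarrow> below z < Suc (card I)"
      unfolding below_def using assms(2) by (simp add: card_mono less_Suc_eq_le)
  qed
  then obtain y where y: "y \<in> I" "ple x y"
    and greatest: "\<And>z. z \<in> I \<Longrightarrow> ple x z \<Longrightarrow> below z \<le> below y"
    by auto
  have "z = y" if z: "z \<in> I" "ple y z" for z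
  proof (rule ccontr)
    assume "z \<noteq> y"
    have trans: "ple u w" if "u \<in> I" "v \<in> I" "w \<in> I" "ple u v" "ple v w" for u v w
      using poset_on_trans[OF assms(1)] that assms(3) by (meson subsetD)
    have "{w\<in>I. ple w y} \<subset> {w\<in>I. ple w z}"
    proof
      show "{w\<in>I. ple w y} \<subseteq> {w\<in>I. ple w z}"
        using trans y z by blast
      have "ple z z" "\<not> ple z y"
        using z y \<open>z \<noteq> y\<close> assms(1,3) poset_on_refl poset_on_antisym by (metis subsetD)+
      then show "{w\<in>I. ple w y} \<noteq> {w\<in>I. ple w z}"
        using z by blast
    qed
    then have "below y < below z"
      unfolding below_def using assms(2) by (simp add: psubset_card_mono)
    moreover have "ple x z"
      using trans assms(4) y z by blast
    ultimately show False
      using greatest[OF z(1)] by simp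
  qed
  with y show ?thesis
    unfolding maximals_def by blast
qed

lemma ideal_gen_eq_iff:
  assumes "poset_on \<Omega> ple" and "finite \<Omega>" and "down_closed \<Omega> ple I" and "B \<subseteq> \<Omega>"
  shows "ideal_gen \<Omega> ple B = I \<longleftrightarrow> maximals ple I \<subseteq> B \<and> B \<subseteq> I"
proof
  assume gen: "ideal_gen \<Omega> ple B = I"
  have "B \<subseteq> I"
    using gen assms(4) poset_on_refl[OF assms(1)] unfolding ideal_gen_def by blast
  moreover have "maximals ple I \<subseteq> B"
  proof
    fix x assume x: "x \<in> maximals ple I"
    then obtain b where "b \<in> B" "ple x b"
      using gen unfolding maximals_def ideal_gen_def by blast
    with x \<open>B \<subseteq> I\<close> show "x \<in> B"
      unfolding maximals_def by blast
  qed
  ultimately show "maximals ple I \<subseteq> B \<and> B \<subseteq> I" by blast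
next
  assume B: "maximals ple I \<subseteq> B \<and> B \<subseteq> I"
  have I: "finite I" "I \<subseteq> \<Omega>"
    using assms(2,3) finite_subset unfolding down_closed_def by blast+
  show "ideal_gen \<Omega> ple B = I"
  proof
    show "ideal_gen \<Omega> ple B \<subseteq> I"
      using B assms(3) unfolding ideal_gen_def down_closed_def by blast
    show "I \<subseteq> ideal_gen \<Omega> ple B"
    proof
      fix x assume "x \<in> I"
      then obtain y where "y \<in> maximals ple I" "ple x y"
        using ex_maximals_above[OF assms(1) I] by blast
      with B \<open>x \<in> I\<close> I(2) show "x \<in> ideal_gen \<Omega> ple B"
        unfolding ideal_gen_def by blast
    qed
  qed
qed

lemma down_closed_ideal_gen:
  assumes "poset_on \<Omega> ple" and "B \<subseteq> \<Omega>"
  shows "down_closed \<Omega> ple (ideal_gen \<Omega> ple B)"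
  unfolding down_closed_def ideal_gen_def using poset_on_trans[OF assms(1)] assms(2) by blast

lemma down_closed_clear_below:
  assumes "poset_on \<Omega> ple" and "J \<subseteq> \<Omega>"
  shows "down_closed \<Omega> ple (clear_below \<Omega> ple J)"
  unfolding down_closed_def clear_below_def
  using poset_on_trans[OF assms(1)] poset_on_antisym[OF assms(1)] assms(2) by (smt (verit) mem_Collect_eq subset_iff)

lemma subset_clear_below:
  assumes "down_closed \<Omega> ple I" and "J \<subseteq> \<Omega>" and "J \<inter> (I - maximals ple I) = {}"
  shows "I \<subseteq> clear_below \<Omega> ple J"
  using assms unfolding down_closed_def clear_below_def maximals_def by blast

lemma disjoint_clear_below_diff_maximals:
  "J \<inter> (clear_below \<Omega> ple J - maximals ple (clear_below \<Omega> ple J)) = {}"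
  unfolding clear_below_def maximals_def by blast

lemma card_clear_below:
  assumes "poset_on \<Omega> ple" and "finite \<Omega>" and "J \<subseteq> \<Omega>"
  defines "I \<equiv> clear_below \<Omega> ple J" and "U \<equiv> ideal_gen \<Omega> (dual_order_rel ple) J"
  shows "card (I - maximals ple I) + card (maximals ple I - J) + card U = card \<Omega>"
proof -
  have "finite I"
    using assms(2) unfolding I_def clear_below_def by simp
  then have "finite (I - maximals ple I)" and "finite (maximals ple I - J)"
    unfolding maximals_def by auto
  then have "card (I - maximals ple I) + card (maximals ple I - J)
      = card ((I - maximals ple I) \<union> (maximals ple I - J))"
    by (rule card_Un_disjoint[symmetric]) blast
  also have "(I - maximals ple I) \<union> (maximals ple I - J) = I - J"
    using disjoint_clear_below_diff_maximals[of J \<Omega> ple] unfolding I_def maximals_def by blast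
  also have "I - J = \<Omega> - U"
    using poset_on_refl[OF assms(1)] assms(3)
    unfolding I_def U_def clear_below_def ideal_gen_def dual_order_rel_def by blast
  also have "card (\<Omega> - U) + card U = card \<Omega>"
    using assms(2) by (simp add: U_def ideal_gen_def card_Diff_subset card_mono)
  finally show ?thesis .
qed

lemma power_mult_power_diff_one_inject:
  fixes q :: nat
  assumes "q \<ge> 3" and "q ^ c * (q - 1) ^ a = q ^ c' * (q - 1) ^ a'"
  shows "c = c'" and "a = a'"
proof -
  have bound: "c \<le> c' \<and> a \<le> a'" if "q ^ c * (q - 1) ^ a = q ^ c' * (q - 1) ^ a'" for c a c' a'
  proof -
    have "coprime q (q - 1)"
      using assms(1) by (intro coprime_diff_one_right_nat) simp
    then have "coprime (q ^ c) ((q - 1) ^ a')" and "coprime ((q - 1) ^ a) (q ^ c')"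
      by (simp_all add: coprime_commute)
    then have "q ^ c dvd q ^ c'" and "(q - 1) ^ a dvd (q - 1) ^ a'"
      using that by (metis coprime_dvd_mult_left_iff coprime_dvd_mult_right_iff dvd_triv_left dvd_triv_right)+
    then show ?thesis
      using assms(1) by (simp add: power_dvd_imp_le)
  qed
  show "c = c'" and "a = a'"
    using bound[OF assms(2)] bound[OF assms(2)[symmetric]] by simp_all
qed

lemma finer_dual_partition_level_partition:
  assumes "\<And>\<chi> \<psi>. \<chi> \<in> char_prod \<Omega> H \<Longrightarrow> \<psi> \<in> char_prod \<Omega> H \<Longrightarrow>
      (\<And>k. (\<Sum>\<beta>\<in>{\<beta>\<in>S. w \<beta> = k}. char_eval \<Omega> \<chi> \<beta>) = (\<Sum>\<beta>\<in>{\<beta>\<in>S. w \<beta> = k}. char_eval \<Omega> \<psi> \<beta>)) \<Longrightarrow>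
      v \<chi> = v \<psi>"
  shows "finer (dual_partition \<Omega> H (level_partition S w)) (level_partition (char_prod \<Omega> H) v)"
  unfolding finer_def
proof
  fix A assume "A \<in> dual_partition \<Omega> H (level_partition S w)"
  then obtain \<chi> where \<chi>: "\<chi> \<in> char_prod \<Omega> H" and A: "A = {\<psi>\<in>char_prod \<Omega> H.
      \<forall>B\<in>level_partition S w. (\<Sum>b\<in>B. char_eval \<Omega> \<chi> b) = (\<Sum>b\<in>B. char_eval \<Omega> \<psi> b)}"
    unfolding dual_partition_def by auto
  have "A \<subseteq> {\<psi>\<in>char_prod \<Omega> H. v \<psi> = v \<chi>}"
  proof
    fix \<psi> assume "\<psi> \<in> A"
    then have \<psi>: "\<psi> \<in> char_prod \<Omega> H"
      and eq: "\<forall>B\<in>level_partition S w. (\<Sum>b\<in>B. char_eval \<Omega> \<chi> b) = (\<Sum>b\<in>B. char_eval \<Omega> \<psi> b)"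
      using A by auto
    have "(\<Sum>\<beta>\<in>{\<beta>\<in>S. w \<beta> = k}. char_eval \<Omega> \<psi> \<beta>) = (\<Sum>\<beta>\<in>{\<beta>\<in>S. w \<beta> = k}. char_eval \<Omega> \<chi> \<beta>)" for k
    proof (cases "k \<in> w ` S")
      case True
      then have "{\<beta>\<in>S. w \<beta> = k} \<in> level_partition S w"
        unfolding level_partition_def by blast
      with eq show ?thesis by simp
    next
      case False
      then have "{\<beta>\<in>S. w \<beta> = k} = {}" by blast
      then show ?thesis by (simp only: sum.empty)
    qed
    with \<psi> show "\<psi> \<in> {\<psi>\<in>char_prod \<Omega> H. v \<psi> = v \<chi>}"
      using assms[OF \<psi> \<chi>] by blast
  qed
  moreover have "{\<psi>\<in>char_prod \<Omega> H. v \<psi> = v \<chi>} \<in> level_partition (char_prod \<Omega> H) v"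
    unfolding level_partition_def using \<chi> by blast
  ultimately show "\<exists>B\<in>level_partition (char_prod \<Omega> H) v. A \<subseteq> B" by blast
qed

locale poset_product =
  fixes \<Omega> :: "'i set" and H :: "'i \<Rightarrow> ('a, 'b) monoid_scheme" and ple :: "'i \<Rightarrow> 'i \<Rightarrow> bool"
  assumes finite_index: "finite \<Omega>"
    and group_factor: "i \<in> \<Omega> \<Longrightarrow> group (H i)"
    and finite_factor: "i \<in> \<Omega> \<Longrightarrow> finite (carrier (H i))"
    and poset: "poset_on \<Omega> ple"
begin

definition fibre :: "'i set \<Rightarrow> ('i \<Rightarrow> 'a) set" where
  "fibre I = {\<beta>\<in>prod_carrier \<Omega> H. ideal_gen \<Omega> ple (supp_H \<Omega> H \<beta>) = I}"

definition fibre_sum :: "('i \<Rightarrow> 'a \<Rightarrow> complex) \<Rightarrow> 'i set \<Rightarrow> complex" where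
  "fibre_sum \<chi> I = (\<Sum>\<beta>\<in>fibre I. char_eval \<Omega> \<chi> \<beta>)"

definition level_sum :: "('i \<Rightarrow> 'a \<Rightarrow> complex) \<Rightarrow> nat \<Rightarrow> complex" where
  "level_sum \<chi> k = (\<Sum>\<beta>\<in>{\<beta>\<in>prod_carrier \<Omega> H. wt_H \<Omega> H ple \<beta> = k}. char_eval \<Omega> \<chi> \<beta>)"

definition fibre_coords :: "'i set \<Rightarrow> 'i \<Rightarrow> 'a set" where
  "fibre_coords I i =
     (if i \<in> maximals ple I then carrier (H i) - {\<one>\<^bsub>H i\<^esub>}
      else if i \<in> I then carrier (H i) else {\<one>\<^bsub>H i\<^esub>})"

lemma fibre_eq_PiE:
  assumes "down_closed \<Omega> ple I"
  shows "fibre I = (\<Pi>\<^sub>E i\<in>\<Omega>. fibre_coords I i)"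
proof -
  have "fibre I = {\<beta>\<in>prod_carrier \<Omega> H. maximals ple I \<subseteq> supp_H \<Omega> H \<beta> \<and> supp_H \<Omega> H \<beta> \<subseteq> I}"
    unfolding fibre_def
    using ideal_gen_eq_iff[OF poset finite_index assms] by (auto simp: supp_H_def)
  also have "\<dots> = (\<Pi>\<^sub>E i\<in>\<Omega>. fibre_coords I i)"
  proof -
    have coord: "h \<in> fibre_coords I i \<longleftrightarrow>
        h \<in> carrier (H i) \<and> (i \<in> maximals ple I \<longrightarrow> h \<noteq> \<one>\<^bsub>H i\<^esub>) \<and> (h \<noteq> \<one>\<^bsub>H i\<^esub> \<longrightarrow> i \<in> I)"
      if "i \<in> \<Omega>" for i h
      using monoid.one_closed[OF group.is_monoid[OF group_factor[OF that]]]
      unfolding fibre_coords_def maximals_def by auto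
    have "maximals ple I \<subseteq> \<Omega>"
      using assms unfolding maximals_def down_closed_def by blast
    then show ?thesis
      unfolding prod_carrier_def supp_H_def using coord by (auto simp: PiE_iff extensional_def)
  qed
  finally show ?thesis .
qed

lemma fibre_sum_eq_prod:
  assumes "down_closed \<Omega> ple I"
  shows "fibre_sum \<chi> I = (\<Prod>i\<in>\<Omega>. \<Sum>h\<in>fibre_coords I i. \<chi> i h)"
  unfolding fibre_sum_def fibre_eq_PiE[OF assms] char_eval_def
  by (rule prod_sum_PiE[symmetric]) (auto simp: fibre_coords_def finite_index finite_factor)

lemma sum_fibre_coords:
  assumes "\<chi> \<in> char_prod \<Omega> H" and "i \<in> \<Omega>"
  shows "(\<Sum>h\<in>fibre_coords I i. \<chi> i h) =
    (if i \<in> maximals ple I then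
       (if \<chi> i = trivial_char (H i) then of_nat (card (carrier (H i)) - 1) else -1)
     else if i \<in> I then
       (if \<chi> i = trivial_char (H i) then of_nat (card (carrier (H i))) else 0)
     else 1)"
proof -
  interpret group "H i" by (rule group_factor[OF assms(2)])
  have char: "is_char (H i) (\<chi> i)"
    using assms unfolding char_prod_def by auto
  have "card (carrier (H i)) \<ge> 1"
    using finite_factor[OF assms(2)] one_closed by (metis card_0_eq empty_iff less_one not_le)
  then show ?thesis
    using sum_is_char[OF is_group char] is_char_one[OF is_group char]
      sum_diff1[of "carrier (H i)" "\<chi> i" "\<one>\<^bsub>H i\<^esub>"] finite_factor[OF assms(2)]
    by (auto simp: fibre_coords_def of_nat_diff)
qed

lemma fibre_sum_nonzero_imp_subset_clear_below:
  assumes "\<chi> \<in> char_prod \<Omega> H" and "fibre_sum \<chi> I \<noteq> 0"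
  shows "I \<subseteq> clear_below \<Omega> ple (supp_Hhat \<Omega> H \<chi>)"
proof (rule subset_clear_below)
  have "fibre I \<noteq> {}"
    using assms(2) unfolding fibre_sum_def by auto
  then obtain \<beta> where "I = ideal_gen \<Omega> ple (supp_H \<Omega> H \<beta>)"
    unfolding fibre_def by auto
  then show dc: "down_closed \<Omega> ple I"
    using down_closed_ideal_gen[OF poset, of "supp_H \<Omega> H \<beta>"] unfolding supp_H_def by auto
  show "supp_Hhat \<Omega> H \<chi> \<subseteq> \<Omega>"
    unfolding supp_Hhat_def by blast
  have nonzero: "(\<Sum>h\<in>fibre_coords I i. \<chi> i h) \<noteq> 0" if "i \<in> \<Omega>" for i
    using assms(2) that finite_index unfolding fibre_sum_eq_prod[OF dc] by auto
  have "\<chi> i = trivial_char (H i)" if i: "i \<in> I - maximals ple I" for i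
  proof -
    have "i \<in> \<Omega>"
      using dc i unfolding down_closed_def by blast
    with i have "(\<Sum>h\<in>fibre_coords I i. \<chi> i h) =
        (if \<chi> i = trivial_char (H i) then of_nat (card (carrier (H i))) else 0)"
      using sum_fibre_coords[OF assms(1) \<open>i \<in> \<Omega>\<close>] by simp
    with nonzero[OF \<open>i \<in> \<Omega>\<close>] show ?thesis
      by (simp split: if_splits)
  qed
  then show "supp_Hhat \<Omega> H \<chi> \<inter> (I - maximals ple I) = {}"
    unfolding supp_Hhat_def by blast
qed

lemma level_sum_eq_sum_fibre_sum:
  "level_sum \<chi> k = (\<Sum>I\<in>{I. I \<subseteq> \<Omega> \<and> card I = k}. fibre_sum \<chi> I)"
proof -
  let ?S = "{\<beta>\<in>prod_carrier \<Omega> H. wt_H \<Omega> H ple \<beta> = k}"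
  have "finite (prod_carrier \<Omega> H)"
    unfolding prod_carrier_def using finite_index finite_factor by (simp add: finite_PiE)
  then have "finite ?S" by simp
  moreover have "finite {I. I \<subseteq> \<Omega> \<and> card I = k}"
    using finite_index by simp
  moreover have "(\<lambda>\<beta>. ideal_gen \<Omega> ple (supp_H \<Omega> H \<beta>)) ` ?S \<subseteq> {I. I \<subseteq> \<Omega> \<and> card I = k}"
    unfolding wt_H_def ideal_gen_def by blast
  ultimately have "level_sum \<chi> k = (\<Sum>I\<in>{I. I \<subseteq> \<Omega> \<and> card I = k}.
      \<Sum>\<beta>\<in>{\<beta>\<in>?S. ideal_gen \<Omega> ple (supp_H \<Omega> H \<beta>) = I}. char_eval \<Omega> \<chi> \<beta>)"
    unfolding level_sum_def by (rule sum.group[symmetric])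
  also have "\<dots> = (\<Sum>I\<in>{I. I \<subseteq> \<Omega> \<and> card I = k}. fibre_sum \<chi> I)"
  proof (rule sum.cong[OF refl])
    fix I assume "I \<in> {I. I \<subseteq> \<Omega> \<and> card I = k}"
    then have "{\<beta>\<in>?S. ideal_gen \<Omega> ple (supp_H \<Omega> H \<beta>) = I} = fibre I"
      unfolding fibre_def wt_H_def by auto
    then show "(\<Sum>\<beta>\<in>{\<beta>\<in>?S. ideal_gen \<Omega> ple (supp_H \<Omega> H \<beta>) = I}. char_eval \<Omega> \<chi> \<beta>) = fibre_sum \<chi> I"
      unfolding fibre_sum_def by simp
  qed
  finally show ?thesis .
qed

lemma level_sum_from_clear_below:
  assumes "\<chi> \<in> char_prod \<Omega> H"
    and "card (clear_below \<Omega> ple (supp_Hhat \<Omega> H \<chi>)) \<le> k"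
  shows "level_sum \<chi> k =
    (if k = card (clear_below \<Omega> ple (supp_Hhat \<Omega> H \<chi>))
     then fibre_sum \<chi> (clear_below \<Omega> ple (supp_Hhat \<Omega> H \<chi>)) else 0)"
proof -
  define I0 where "I0 = clear_below \<Omega> ple (supp_Hhat \<Omega> H \<chi>)"
  have "finite I0"
    unfolding I0_def clear_below_def using finite_index by simp
  have "fibre_sum \<chi> I = (if I = I0 then fibre_sum \<chi> I0 else 0)" if "card I = k" for I
  proof (cases "fibre_sum \<chi> I = 0")
    case False
    then have "I \<subseteq> I0"
      unfolding I0_def by (rule fibre_sum_nonzero_imp_subset_clear_below[OF assms(1)])
    with \<open>finite I0\<close> have "I = I0"
      using assms(2) that unfolding I0_def by (metis card_seteq)
    then show ?thesis by simp
  qed auto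
  then have "level_sum \<chi> k =
      (\<Sum>I\<in>{I. I \<subseteq> \<Omega> \<and> card I = k}. if I = I0 then fibre_sum \<chi> I0 else 0)"
    unfolding level_sum_eq_sum_fibre_sum by (intro sum.cong) simp_all
  also have "\<dots> = (if k = card I0 then fibre_sum \<chi> I0 else 0)"
  proof -
    have "I0 \<subseteq> \<Omega>"
      unfolding I0_def clear_below_def by blast
    moreover have "finite {I. I \<subseteq> \<Omega> \<and> card I = k}"
      using finite_index by simp
    ultimately show ?thesis
      by (subst sum.delta) auto
  qed
  finally show ?thesis
    unfolding I0_def .
qed

lemma norm_fibre_sum_clear_below:
  assumes "\<chi> \<in> char_prod \<Omega> H" and "\<And>i. i \<in> \<Omega> \<Longrightarrow> card (carrier (H i)) = q"
  defines "J \<equiv> supp_Hhat \<Omega> H \<chi>"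
  defines "I \<equiv> clear_below \<Omega> ple J"
  shows "norm (fibre_sum \<chi> I) = real (q ^ card (I - maximals ple I) * (q - 1) ^ card (maximals ple I - J))"
proof -
  have "J \<subseteq> \<Omega>"
    unfolding J_def supp_Hhat_def by blast
  then have dc: "down_closed \<Omega> ple I"
    unfolding I_def by (rule down_closed_clear_below[OF poset])
  have "norm (\<Sum>h\<in>fibre_coords I i. \<chi> i h) =
      (if i \<in> I - maximals ple I then real q else 1) * (if i \<in> maximals ple I - J then real (q - 1) else 1)"
    if "i \<in> \<Omega>" for i
  proof -
    have "i \<in> J \<longleftrightarrow> \<chi> i \<noteq> trivial_char (H i)"
      using that unfolding J_def supp_Hhat_def by blast
    moreover have "J \<inter> (I - maximals ple I) = {}"
      unfolding I_def by (rule disjoint_clear_below_diff_maximals)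
    moreover have "maximals ple I \<subseteq> I"
      unfolding maximals_def by blast
    ultimately show ?thesis
      using sum_fibre_coords[OF assms(1) that, of I] assms(2)[OF that] by auto
  qed
  then have "norm (fibre_sum \<chi> I) =
      (\<Prod>i\<in>\<Omega>. (if i \<in> I - maximals ple I then real q else 1) * (if i \<in> maximals ple I - J then real (q - 1) else 1))"
    unfolding fibre_sum_eq_prod[OF dc] prod_norm[symmetric] by (rule prod.cong[OF refl])
  also have "\<dots> = real q ^ card (I - maximals ple I) * real (q - 1) ^ card (maximals ple I - J)"
  proof -
    have pow: "(\<Prod>i\<in>\<Omega>. if i \<in> A then c else 1) = c ^ card A" if "A \<subseteq> \<Omega>" for A and c :: real
      using prod.inter_restrict[OF finite_index, of "\<lambda>_. c" A] that by (simp add: Int_absorb1)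
    have "I \<subseteq> \<Omega>"
      using dc unfolding down_closed_def by blast
    then have "I - maximals ple I \<subseteq> \<Omega>" "maximals ple I - J \<subseteq> \<Omega>"
      unfolding maximals_def by blast+
    then show ?thesis
      by (simp only: prod.distrib pow)
  qed
  finally show ?thesis by simp
qed

lemma greatest_nonzero_level_sum:
  assumes "\<chi> \<in> char_prod \<Omega> H" and "\<And>i. i \<in> \<Omega> \<Longrightarrow> card (carrier (H i)) = q" and "q \<ge> 2"
  shows "(GREATEST k. level_sum \<chi> k \<noteq> 0) = card (clear_below \<Omega> ple (supp_Hhat \<Omega> H \<chi>))"
proof (rule Greatest_equality)
  let ?I = "clear_below \<Omega> ple (supp_Hhat \<Omega> H \<chi>)"
  have "norm (fibre_sum \<chi> ?I) > 0"
    using norm_fibre_sum_clear_below[OF assms(1,2)] assms(3) by simp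
  then show "level_sum \<chi> (card ?I) \<noteq> 0"
    using level_sum_from_clear_below[OF assms(1) order_refl] by simp
  fix k assume "level_sum \<chi> k \<noteq> 0"
  then show "k \<le> card ?I"
    using level_sum_from_clear_below[OF assms(1), of k] by (cases "card ?I \<le> k") (auto split: if_splits)
qed

lemma dual_weight_eq_if_level_sums_eq:
  assumes "\<chi> \<in> char_prod \<Omega> H" and "\<psi> \<in> char_prod \<Omega> H"
    and "\<And>i. i \<in> \<Omega> \<Longrightarrow> card (carrier (H i)) = q" and "q \<ge> 3"
    and "level_sum \<chi> = level_sum \<psi>"
  shows "wt_Hhat \<Omega> H (dual_order_rel ple) \<chi> = wt_Hhat \<Omega> H (dual_order_rel ple) \<psi>"
proof -
  define I where "I \<phi> = clear_below \<Omega> ple (supp_Hhat \<Omega> H \<phi>)" for \<phi>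
  define c where "c \<phi> = card (I \<phi> - maximals ple (I \<phi>))" for \<phi>
  define a where "a \<phi> = card (maximals ple (I \<phi>) - supp_Hhat \<Omega> H \<phi>)" for \<phi>
  have top: "norm (level_sum \<phi> (card (I \<phi>))) = real (q ^ c \<phi> * (q - 1) ^ a \<phi>)"
    if "\<phi> \<in> char_prod \<Omega> H" for \<phi>
    using level_sum_from_clear_below[OF that order_refl] norm_fibre_sum_clear_below[OF that assms(3)]
    unfolding I_def c_def a_def by simp
  have "card (I \<chi>) = card (I \<psi>)"
    using greatest_nonzero_level_sum[OF assms(1,3)] greatest_nonzero_level_sum[OF assms(2,3)] assms(4,5)
    unfolding I_def by simp
  then have "q ^ c \<chi> * (q - 1) ^ a \<chi> = q ^ c \<psi> * (q - 1) ^ a \<psi>"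
    using top[OF assms(1)] top[OF assms(2)] assms(5) by (metis of_nat_eq_iff)
  then have "c \<chi> = c \<psi>" and "a \<chi> = a \<psi>"
    using power_mult_power_diff_one_inject[OF assms(4)] by blast+
  moreover have "c \<phi> + a \<phi> + wt_Hhat \<Omega> H (dual_order_rel ple) \<phi> = card \<Omega>" for \<phi>
    using card_clear_below[OF poset finite_index, of "supp_Hhat \<Omega> H \<phi>"]
    unfolding c_def a_def I_def wt_Hhat_def by (simp add: supp_Hhat_def)
  ultimately show ?thesis
    by (metis add_left_cancel)
qed

end

theorem theorem2p2:
  fixes \<Omega> :: "'i set" and H :: "'i \<Rightarrow> ('a, 'b) monoid_scheme" and ple :: "'i \<Rightarrow> 'i \<Rightarrow> bool"
  assumes "finite \<Omega>"
    and "\<forall>i\<in>\<Omega>. comm_group (H i) \<and> finite (carrier (H i))"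
    and "\<forall>i\<in>\<Omega>. \<forall>l\<in>\<Omega>. card (carrier (H i)) = card (carrier (H l))"
    and "\<forall>i\<in>\<Omega>. card (carrier (H i)) \<ge> 3"
    and "poset_on \<Omega> ple"
  shows "finer (dual_partition \<Omega> H (level_partition (prod_carrier \<Omega> H) (wt_H \<Omega> H ple)))
               (level_partition (char_prod \<Omega> H) (wt_Hhat \<Omega> H (dual_order_rel ple)))"
proof -
  interpret poset_product \<Omega> H ple
    using assms(1,2,5) by (intro poset_product.intro) (auto intro: comm_group.axioms(2))
  obtain q where q: "\<And>i. i \<in> \<Omega> \<Longrightarrow> card (carrier (H i)) = q" and "q \<ge> 3"
  proof (cases "\<Omega> = {}")
    case False
    then obtain i0 where "i0 \<in> \<Omega>" by blast
    then have "\<And>i. i \<in> \<Omega> \<Longrightarrow> card (carrier (H i)) = card (carrier (H i0))"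
      and "card (carrier (H i0)) \<ge> 3"
      using assms(3,4) by blast+
    then show thesis by (rule that)
  qed (use that[of 3] in simp)
  show ?thesis
  proof (rule finer_dual_partition_level_partition)
    fix \<chi> \<psi> assume "\<chi> \<in> char_prod \<Omega> H" and "\<psi> \<in> char_prod \<Omega> H"
      and "\<And>k. (\<Sum>\<beta>\<in>{\<beta>\<in>prod_carrier \<Omega> H. wt_H \<Omega> H ple \<beta> = k}. char_eval \<Omega> \<chi> \<beta>) =
                (\<Sum>\<beta>\<in>{\<beta>\<in>prod_carrier \<Omega> H. wt_H \<Omega> H ple \<beta> = k}. char_eval \<Omega> \<psi> \<beta>)"
    moreover from this(3) have "level_sum \<chi> = level_sum \<psi>"
      unfolding level_sum_def by (rule ext)
    ultimately show "wt_Hhat \<Omega> H (dual_order_rel ple) \<chi> = wt_Hhat \<Omega> H (dual_order_rel ple) \<psi>"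
      using dual_weight_eq_if_level_sums_eq[OF _ _ q \<open>q \<ge> 3\<close>] by blast
  qed
qed

end
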